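(* Algorithm 1 picks at most $(\alpha+\varepsilon)\cdot\widetilde{\mathrm{opt}}$ sets in $\mathrm{SOL}$.
   Context: Algorithm 1. Input: a stream of sets $S_1,\dots,S_m\subseteq[n]$, an integer $\alpha\ge1$, a parameter $\varepsilon>0$, and a number $\widetilde{\mathrm{opt}}$ with $\mathrm{opt}\le\widetilde{\mathrm{opt}}\le(1+\varepsilon)\mathrm{opt}$, where $\mathrm{opt}$ is the minimum number of input sets covering $[n]$. (1) Set $U\leftarrow[n]$, $\mathrm{SOL}\leftarrow\emptyset$. (2) In one pass, for each $S_i$ with $|S_i\cap U|\ge n/(\varepsilon\,\widetilde{\mathrm{opt}})$: add $i$ to $\mathrm{SOL}$ and set $U\leftarrow U\setminus S_i$. (3) For $j=1,\dots,\alpha$: (a) let $U_{\mathrm{smpl}}\subseteq U$ contain each element of $U$ independently with probability $p=16\,\widetilde{\mathrm{opt}}\log m/n^{1-1/\alpha}$; (b) in one pass, store $S'_i=S_i\cap U_{\mathrm{smpl}}$ for all $i\in[m]$; (c) compute an optimal (minimum-size) set cover $\mathrm{OPT}'$ of the instance $(S'_1,\dots,S'_m)$ on universe $U_{\mathrm{smpl}}$ and add its indices to $\mathrm{SOL}$; (d) in another pass, set $U\leftarrow U\setminus\bigcup_{i\in\mathrm{OPT}'}S_i$. (4) Return $\mathrm{SOL}$. *)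

theory Defs
  imports Complex_Main
begin

definition is_cover :: "(nat \<Rightarrow> nat set) \<Rightarrow> nat \<Rightarrow> nat set \<Rightarrow> nat set \<Rightarrow> bool" where
  "is_cover S m V I \<longleftrightarrow> I \<subseteq> {1..m} \<and> V \<subseteq> (\<Union>i\<in>I. S i)"

definition opt :: "(nat \<Rightarrow> nat set) \<Rightarrow> nat \<Rightarrow> nat set \<Rightarrow> nat" where
  "opt S m V = Min {card I | I. is_cover S m V I}"

definition is_min_cover :: "(nat \<Rightarrow> nat set) \<Rightarrow> nat \<Rightarrow> nat set \<Rightarrow> nat set \<Rightarrow> bool" where
  "is_min_cover S m V I \<longleftrightarrow> is_cover S m V I \<and> (\<forall>J. is_cover S m V J \<longrightarrow> card I \<le> card J)"

text \<open>Step (2): one pass over S 1, ..., S i in order, with threshold t.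
  The state is (U, SOL).\<close>
fun first_pass :: "(nat \<Rightarrow> nat set) \<Rightarrow> real \<Rightarrow> nat \<Rightarrow> nat set \<times> nat set \<Rightarrow> nat set \<times> nat set" where
  "first_pass S t 0 st = st"
| "first_pass S t (Suc i) st =
     (let (U, Sol) = first_pass S t i st in
      if real (card (S (Suc i) \<inter> U)) \<ge> t then (U - S (Suc i), insert (Suc i) Sol) else (U, Sol))"

end

theory Submission
  imports Defs
begin

text \<open>Each set taken in the first pass removes at least t uncovered elements, so
  t \<cdot> |SOL| + |U| never exceeds its initial value n; hence that pass picks at most
  n / t = \<epsilon> \<cdot> opt_est sets. Each of the \<alpha> later rounds picks a minimum cover of a
  subuniverse of [n], which is no larger than an optimal cover of [n] restricted to that
  subuniverse, so it picks at most opt \<le> opt_est sets.\<close>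

lemma first_pass_potential:
  assumes "first_pass S t i (U0, Sol0) = (U, Sol)" "finite U0" "t \<ge> 0"
  shows "U \<subseteq> U0 \<and> real (card Sol) * t + real (card U) \<le> real (card Sol0) * t + real (card U0)"
  using assms(1)
proof (induction i arbitrary: U Sol)
  case 0
  then show ?case by simp
next
  case (Suc i)
  obtain U' Sol' where prev: "first_pass S t i (U0, Sol0) = (U', Sol')"
    by (metis surj_pair)
  note IH = Suc.IH[OF prev]
  have "finite U'"
    using IH assms(2) finite_subset by blast
  show ?case
  proof (cases "real (card (S (Suc i) \<inter> U')) \<ge> t")
    case True
    then have step: "U = U' - S (Suc i)" "Sol = insert (Suc i) Sol'"
      using Suc.prems prev by auto
    have "card (insert (Suc i) Sol') \<le> card Sol' + 1"
      by (simp add: card_insert_le_m1)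
    then have "real (card Sol) * t \<le> (real (card Sol') + 1) * t"
      using step assms(3) by (intro mult_right_mono) auto
    moreover have "real (card U) = real (card U') - real (card (S (Suc i) \<inter> U'))"
      using \<open>finite U'\<close> step(1)
      by (simp add: card_Diff_subset_Int card_mono of_nat_diff Int_commute)
    ultimately show ?thesis
      using IH True step(1) by (auto simp: algebra_simps)
  next
    case False
    then show ?thesis
      using Suc.prems prev IH by auto
  qed
qed

lemma first_pass_card_le:
  assumes "first_pass S t i (U0, {}) = (U, Sol)" "finite U0" "t > 0"
  shows "real (card Sol) \<le> real (card U0) / t"
proof -
  have "real (card Sol) * t \<le> real (card U0)"
    using first_pass_potential[OF assms(1,2)] assms(3) by simp
  then show ?thesis
    using assms(3) by (simp add: field_simps)
qed

lemma opt_attained: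
  assumes "is_cover S m V J"
  obtains I where "is_cover S m V I" "card I = opt S m V"
proof -
  have "{card I | I. is_cover S m V I} \<subseteq> {..m}"
    using card_mono[of "{1..m}"] by (auto simp: is_cover_def)
  then have "opt S m V \<in> {card I | I. is_cover S m V I}"
    unfolding opt_def using assms by (intro Min_in) (auto intro: finite_subset)
  then show ?thesis
    using that by auto
qed

lemma opt_pos:
  assumes "is_cover S m V J" "V \<noteq> {}"
  shows "opt S m V \<ge> 1"
proof -
  obtain I where I: "is_cover S m V I" "card I = opt S m V"
    using opt_attained[OF assms(1)] .
  then have "finite I" "I \<noteq> {}"
    using assms(2) finite_subset by (auto simp: is_cover_def)
  then show ?thesis
    using I(2) by (metis One_nat_def Suc_leI card_gt_0_iff)
qed

lemma min_cover_of_subuniverse_card_le_opt: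
  assumes "is_cover S m V J" "R \<subseteq> V" "is_min_cover (\<lambda>i. S i \<inter> R) m R I'"
  shows "card I' \<le> opt S m V"
proof -
  obtain I where I: "is_cover S m V I" "card I = opt S m V"
    using opt_attained[OF assms(1)] .
  have "is_cover (\<lambda>i. S i \<inter> R) m R I"
    using I(1) assms(2) by (auto simp: is_cover_def)
  then show ?thesis
    using assms(3) I(2) by (auto simp: is_min_cover_def)
qed

lemma card_union_rounds_le:
  assumes "\<forall>j<k. Sol (Suc j) = Sol j \<union> A j \<and> card (A j) \<le> c"
  shows "card (Sol k) \<le> card (Sol 0) + k * c"
  using assms
proof (induction k)
  case 0
  then show ?case by simp
next
  case (Suc k)
  have "card (Sol (Suc k)) \<le> card (Sol k) + card (A k)"
    using Suc.prems by (simp add: card_Un_le)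
  then show ?case
    using Suc by fastforce
qed

theorem lemma3p7:
  fixes S :: "nat \<Rightarrow> nat set" and m n \<alpha> :: nat and \<epsilon> opt_est :: real
    and Us Sols R OPTs :: "nat \<Rightarrow> nat set"
  assumes n_pos: "n \<ge> 1"
    and sets_sub: "\<forall>i\<in>{1..m}. S i \<subseteq> {1..n}"
    and feasible: "(\<Union>i\<in>{1..m}. S i) = {1..n}"
    and alpha: "\<alpha> \<ge> 1"
    and eps: "\<epsilon> > 0"
    and est: "real (opt S m {1..n}) \<le> opt_est" "opt_est \<le> (1 + \<epsilon>) * real (opt S m {1..n})"
    and init: "(Us 0, Sols 0) = first_pass S (real n / (\<epsilon> * opt_est)) m ({1..n}, {})"
    and rounds: "\<forall>j<\<alpha>.
         R j \<subseteq> Us j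
       \<and> is_min_cover (\<lambda>i. S i \<inter> R j) m (R j) (OPTs j)
       \<and> Sols (Suc j) = Sols j \<union> OPTs j
       \<and> Us (Suc j) = Us j - (\<Union>i\<in>OPTs j. S i)"
  shows "real (card (Sols \<alpha>)) \<le> (real \<alpha> + \<epsilon>) * opt_est"
proof -
  have cover: "is_cover S m {1..n} {1..m}"
    using feasible by (simp add: is_cover_def)
  have "{1..n} \<noteq> {}"
    using n_pos by simp
  then have "opt S m {1..n} \<ge> 1"
    by (rule opt_pos[OF cover])
  then have opt_est_ge_1: "opt_est \<ge> 1"
    using est(1) by linarith
  then have first: "real (card (Sols 0)) \<le> \<epsilon> * opt_est"
    using first_pass_card_le[OF init[symmetric]] eps n_pos by simp
  have round: "R j \<subseteq> Us j" "is_min_cover (\<lambda>i. S i \<inter> R j) m (R j) (OPTs j)"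
    "Sols (Suc j) = Sols j \<union> OPTs j" "Us (Suc j) \<subseteq> Us j" if "j < \<alpha>" for j
    using rounds that by auto
  have "Us 0 \<subseteq> {1..n}"
    using first_pass_potential[OF init[symmetric]] eps opt_est_ge_1 by simp
  moreover have "Us j \<subseteq> Us 0" if "j < \<alpha>" for j
  proof (rule lift_Suc_antimono_le_ivl[of "{..<\<alpha>}"])
    show "Us (Suc i) \<subseteq> Us i" if "i \<in> {..<\<alpha>}" for i
      using round(4) that by simp
  qed (use that in auto)
  ultimately have "card (OPTs j) \<le> opt S m {1..n}" if "j < \<alpha>" for j
    using round[OF that] that by (intro min_cover_of_subuniverse_card_le_opt[OF cover]) auto
  then have "card (Sols \<alpha>) \<le> card (Sols 0) + \<alpha> * opt S m {1..n}"
    using round(3) by (intro card_union_rounds_le) auto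
  then have "real (card (Sols \<alpha>)) \<le> real (card (Sols 0)) + real \<alpha> * real (opt S m {1..n})"
    by (metis of_nat_add of_nat_le_iff of_nat_mult)
  also have "\<dots> \<le> \<epsilon> * opt_est + real \<alpha> * opt_est"
    using first est(1) by (intro add_mono mult_left_mono) auto
  finally show ?thesis
    by (simp add: algebra_simps)
qed

end
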